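(* Let $n,m$ be integers with $n\geq m\geq 0$. Then $$ gr_{3}(K_{3} : S(n,m))\geq \begin{cases} 5\cdot\frac{n}{2} +1 & \text{ if $n$ is even,}\\ 5\cdot\frac{n-1}{2} + 2 & \text{ if $n$ is odd.} \end{cases} $$
   Context: For integers $n\geq m\geq 0$, the double star $S(n,m)$ is the graph obtained from the disjoint union of the stars $K_{1,n}$ and $K_{1,m}$ by adding an edge between their centers. A $k$-coloring of a graph is an assignment of one of $k$ colors to each edge. A subgraph is rainbow if all its edges have distinct colors and monochromatic if all its edges have the same color. For graphs $G,H$ and a positive integer $k$, the Gallai–Ramsey number $gr_k(G:H)$ is the minimum integer $N$ such that every $k$-coloring of the edges of the complete graph $K_N$ contains either a rainbow copy of $G$ or a monochromatic copy of $H$. *)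

theory Defs
  imports Main
begin

text \<open>Graphs are given by their edge sets (2-element vertex sets); their vertex set is
  the union of the edges (the graphs considered have no isolated vertices).
  The complete graph K_N has vertex set {..<N}; a k-colouring assigns to every
  2-subset of {..<N} a colour in {..<k}.\<close>

definition coloring :: "nat \<Rightarrow> nat \<Rightarrow> (nat set \<Rightarrow> nat) \<Rightarrow> bool" where
  "coloring k N c \<longleftrightarrow> (\<forall>e. e \<subseteq> {..<N} \<and> card e = 2 \<longrightarrow> c e < k)"

definition rainbow_copy :: "(nat set \<Rightarrow> nat) \<Rightarrow> nat \<Rightarrow> 'a set set \<Rightarrow> bool" where
  "rainbow_copy c N G \<longleftrightarrow>
     (\<exists>f. inj_on f (\<Union>G) \<and> f ` (\<Union>G) \<subseteq> {..<N} \<and> inj_on (\<lambda>e. c (f ` e)) G)"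

definition mono_copy :: "(nat set \<Rightarrow> nat) \<Rightarrow> nat \<Rightarrow> 'a set set \<Rightarrow> bool" where
  "mono_copy c N H \<longleftrightarrow>
     (\<exists>f col. inj_on f (\<Union>H) \<and> f ` (\<Union>H) \<subseteq> {..<N} \<and> (\<forall>e\<in>H. c (f ` e) = col))"

definition gr_prop :: "nat \<Rightarrow> 'a set set \<Rightarrow> 'b set set \<Rightarrow> nat \<Rightarrow> bool" where
  "gr_prop k G H N \<longleftrightarrow>
     (\<forall>c. coloring k N c \<longrightarrow> rainbow_copy c N G \<or> mono_copy c N H)"

definition gr :: "nat \<Rightarrow> 'a set set \<Rightarrow> 'b set set \<Rightarrow> nat" where
  "gr k G H = (LEAST N. gr_prop k G H N)"

definition K3 :: "nat set set" where
  "K3 = {{0,1},{1,2},{0,2}}"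

definition double_star :: "nat \<Rightarrow> nat \<Rightarrow> nat set set" where
  "double_star n m = {{0,1}} \<union> {{0,i} | i. 2 \<le> i \<and> i < n + 2}
                               \<union> {{1,i} | i. n + 2 \<le> i \<and> i < n + m + 2}"

end

theory Submission
  imports Defs
begin

text \<open>Blow up the two-colouring of K5 by two complementary pentagons: vertex w of K_N
  goes to class w mod 5, edges inside a class get colour 2, edges between cyclically
  consecutive classes colour 0, and all other edges colour 1. A triangle using colour 2
  has two vertices in one class, so its other two edges get the same colour; hence
  there is no rainbow triangle. Every colour neighbourhood of a vertex lies in two
  classes, which together have at most n vertices when N \<le> 5 (n div 2) + n mod 2,
  whereas a monochromatic S(n,m) has a centre with n + 1 neighbours of one colour.\<close>

lemma rainbow_copy_K3E:
  assumes "rainbow_copy c N K3"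
  obtains x y z where "c {x, y} \<noteq> c {y, z}" "c {y, z} \<noteq> c {x, z}" "c {x, y} \<noteq> c {x, z}"
proof -
  obtain f where inj: "inj_on (\<lambda>e. c (f ` e)) K3"
    using assms unfolding rainbow_copy_def by blast
  have edges: "{0, 1} \<in> K3" "{1, 2} \<in> K3" "{0, 2} \<in> K3"
    unfolding K3_def by auto
  have distinct: "{0::nat, 1} \<noteq> {1, 2}" "{1::nat, 2} \<noteq> {0, 2}" "{0::nat, 1} \<noteq> {0, 2}"
    by (auto simp: doubleton_eq_iff)
  have "c (f ` {0, 1}) \<noteq> c (f ` {1, 2})" "c (f ` {1, 2}) \<noteq> c (f ` {0, 2})"
    "c (f ` {0, 1}) \<noteq> c (f ` {0, 2})"
    using inj_onD[OF inj] edges distinct by metis+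
  then show thesis
    by (intro that) simp_all
qed

definition colour_nbhd :: "(nat set \<Rightarrow> nat) \<Rightarrow> nat \<Rightarrow> nat \<Rightarrow> nat \<Rightarrow> nat set" where
  "colour_nbhd c N v col = {w. w < N \<and> w \<noteq> v \<and> c {v, w} = col}"

lemma finite_colour_nbhd: "finite (colour_nbhd c N v col)"
  unfolding colour_nbhd_def by simp

lemma mono_copy_double_star_large_colour_nbhd:
  assumes "mono_copy c N (double_star n m)"
  obtains v col where "n < card (colour_nbhd c N v col)"
proof -
  obtain f col where inj: "inj_on f (\<Union>(double_star n m))"
    and range: "f ` \<Union>(double_star n m) \<subseteq> {..<N}"
    and mono: "\<forall>e\<in>double_star n m. c (f ` e) = col"
    using assms unfolding mono_copy_def by blast
  have edge: "{0, i} \<in> double_star n m" if "i \<in> {1..n + 1}" for i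
    using that unfolding double_star_def by (cases "i = 1") auto
  have vertices: "{0..n + 1} \<subseteq> \<Union>(double_star n m)"
  proof
    fix i assume i: "i \<in> {0..n + 1}"
    show "i \<in> \<Union>(double_star n m)"
    proof (cases "i = 0")
      case True
      then show ?thesis using edge[of 1] by auto
    next
      case False
      then show ?thesis using edge[of i] i by auto
    qed
  qed
  have leaves: "f ` {1..n + 1} \<subseteq> colour_nbhd c N (f 0) col"
  proof
    fix w assume "w \<in> f ` {1..n + 1}"
    then obtain i where i: "i \<in> {1..n + 1}" and w: "w = f i"
      by blast
    have "i \<in> \<Union>(double_star n m)" "0 \<in> \<Union>(double_star n m)"
      using i vertices by auto
    then have "w < N" "w \<noteq> f 0"
      using i w range inj_onD[OF inj, of i 0] by auto
    moreover have "c {f 0, w} = col"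
      using mono edge[OF i] w by auto
    ultimately show "w \<in> colour_nbhd c N (f 0) col"
      unfolding colour_nbhd_def by simp
  qed
  have "card (f ` {1..n + 1}) = n + 1"
    using inj_on_subset[OF inj] vertices by (simp add: card_image subset_iff)
  then have "n < card (colour_nbhd c N (f 0) col)"
    using card_mono[OF finite_colour_nbhd leaves] by simp
  then show thesis
    by (rule that)
qed

lemma card_residue_class_le:
  assumes "N \<le> d * K + r"
  shows "card {w. w < N \<and> w mod d = r} \<le> K"
proof -
  let ?C = "{w. w < N \<and> w mod d = r}"
  have decomp: "w = d * (w div d) + r" if "w \<in> ?C" for w
    using that div_mult_mod_eq[of w d] by (simp add: mult.commute)
  have "inj_on (\<lambda>w. w div d) ?C"
    by (rule inj_onI) (metis decomp)
  moreover have "w div d < K" if "w \<in> ?C" for w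
  proof -
    have "w = d * (w div d) + r" "w < N"
      using decomp[OF that] that by simp_all
    then have "d * (w div d) < d * K"
      using assms by linarith
    then show ?thesis by simp
  qed
  ultimately show ?thesis
    using card_inj_on_le[of "\<lambda>w. w div d" ?C "{..<K}"] by fastforce
qed

lemma card_two_residue_classes_le:
  assumes N: "N \<le> 5 * (n div 2) + n mod 2" and "r1 \<noteq> r2"
  shows "card {w. w < N \<and> (w mod 5 = r1 \<or> w mod 5 = r2)} \<le> n"
proof -
  define bound where "bound r = n div 2 + (if r = 0 then n mod 2 else 0)" for r :: nat
  have residue_class: "card {w. w < N \<and> w mod 5 = r} \<le> bound r" for r
    by (rule card_residue_class_le) (use N in \<open>auto simp: bound_def\<close>)
  have "{w. w < N \<and> (w mod 5 = r1 \<or> w mod 5 = r2)}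
          = {w. w < N \<and> w mod 5 = r1} \<union> {w. w < N \<and> w mod 5 = r2}"
    by auto
  then have "card {w. w < N \<and> (w mod 5 = r1 \<or> w mod 5 = r2)}
               \<le> card {w. w < N \<and> w mod 5 = r1} + card {w. w < N \<and> w mod 5 = r2}"
    by (simp add: card_Un_le)
  also have "\<dots> \<le> bound r1 + bound r2"
    using residue_class[of r1] residue_class[of r2] by (rule add_mono)
  also have "\<dots> \<le> n"
    using \<open>r1 \<noteq> r2\<close> unfolding bound_def
    by (auto; use mult_div_mod_eq[of 2 n] in linarith)
  finally show ?thesis .
qed

definition pentagon_colour :: "nat \<Rightarrow> nat \<Rightarrow> nat" where
  "pentagon_colour i j =
     (if i = j then 2 else if (i + 1) mod 5 = j \<or> (j + 1) mod 5 = i then 0 else 1)"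

lemma pentagon_colour_commute: "pentagon_colour i j = pentagon_colour j i"
  unfolding pentagon_colour_def by auto

lemma pentagon_colour_less: "pentagon_colour i j < 3"
  unfolding pentagon_colour_def by auto

lemma pentagon_colour_eq_2_iff: "pentagon_colour i j = 2 \<longleftrightarrow> i = j"
  unfolding pentagon_colour_def by auto

lemma pentagon_colour_no_rainbow_triangle:
  "pentagon_colour i j = pentagon_colour j k \<or> pentagon_colour j k = pentagon_colour i k
     \<or> pentagon_colour i j = pentagon_colour i k"
proof (cases "i = j \<or> j = k \<or> i = k")
  case True
  then show ?thesis by (auto simp: pentagon_colour_commute)
next
  case False
  then have "pentagon_colour i j \<noteq> 2" "pentagon_colour j k \<noteq> 2" "pentagon_colour i k \<noteq> 2"
    by (simp_all add: pentagon_colour_eq_2_iff)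
  then show ?thesis
    using pentagon_colour_less[of i j] pentagon_colour_less[of j k] pentagon_colour_less[of i k]
    by linarith
qed

lemma less_5_iff: "(j::nat) < 5 \<longleftrightarrow> j = 0 \<or> j = 1 \<or> j = 2 \<or> j = 3 \<or> j = 4"
  by auto

lemma pentagon_colour_class:
  assumes "i < 5"
  obtains r1 r2 where "r1 \<noteq> r2" and "\<And>j. j < 5 \<Longrightarrow> pentagon_colour i j = col \<Longrightarrow> j = r1 \<or> j = r2"
proof -
  consider "col = 0" | "col = 1" | "col \<noteq> 0 \<and> col \<noteq> 1" by blast
  then show thesis
  proof cases
    case 1
    show thesis
      by (rule that[of "(i + 1) mod 5" "(i + 4) mod 5"])
         (use assms 1 in \<open>auto simp: less_5_iff pentagon_colour_def\<close>)
  next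
    case 2
    show thesis
      by (rule that[of "(i + 2) mod 5" "(i + 3) mod 5"])
         (use assms 2 in \<open>auto simp: less_5_iff pentagon_colour_def\<close>)
  next
    case 3
    show thesis
      by (rule that[of i "(i + 1) mod 5"])
         (use assms 3 in \<open>auto simp: less_5_iff pentagon_colour_def\<close>)
  qed
qed

definition pentagon_blowup :: "nat set \<Rightarrow> nat" where
  "pentagon_blowup e = pentagon_colour (Min e mod 5) (Max e mod 5)"

lemma pentagon_blowup_doubleton: "pentagon_blowup {x, y} = pentagon_colour (x mod 5) (y mod 5)"
  unfolding pentagon_blowup_def
  by (cases "x \<le> y") (auto simp: min_def max_def pentagon_colour_commute)

lemma coloring_pentagon_blowup: "coloring 3 N pentagon_blowup"
  unfolding coloring_def pentagon_blowup_def by (simp add: pentagon_colour_less)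

lemma no_rainbow_copy_K3_pentagon_blowup: "\<not> rainbow_copy pentagon_blowup N K3"
proof
  assume "rainbow_copy pentagon_blowup N K3"
  then obtain x y z where
    "pentagon_blowup {x, y} \<noteq> pentagon_blowup {y, z}"
    "pentagon_blowup {y, z} \<noteq> pentagon_blowup {x, z}"
    "pentagon_blowup {x, y} \<noteq> pentagon_blowup {x, z}"
    by (rule rainbow_copy_K3E)
  then show False
    using pentagon_colour_no_rainbow_triangle[of "x mod 5" "y mod 5" "z mod 5"]
    by (simp add: pentagon_blowup_doubleton)
qed

lemma card_colour_nbhd_pentagon_blowup:
  assumes "N \<le> 5 * (n div 2) + n mod 2"
  shows "card (colour_nbhd pentagon_blowup N v col) \<le> n"
proof -
  obtain r1 r2 where "r1 \<noteq> r2"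
    and r: "\<And>j. j < 5 \<Longrightarrow> pentagon_colour (v mod 5) j = col \<Longrightarrow> j = r1 \<or> j = r2"
    using pentagon_colour_class[of "v mod 5" col] by auto
  have "w mod 5 = r1 \<or> w mod 5 = r2" if "w \<in> colour_nbhd pentagon_blowup N v col" for w
    using that r[of "w mod 5"] unfolding colour_nbhd_def by (simp add: pentagon_blowup_doubleton)
  then have "colour_nbhd pentagon_blowup N v col \<subseteq> {w. w < N \<and> (w mod 5 = r1 \<or> w mod 5 = r2)}"
    unfolding colour_nbhd_def by blast
  then have "card (colour_nbhd pentagon_blowup N v col)
               \<le> card {w. w < N \<and> (w mod 5 = r1 \<or> w mod 5 = r2)}"
    by (rule card_mono[rotated]) simp
  also have "\<dots> \<le> n"
    using card_two_residue_classes_le[OF assms \<open>r1 \<noteq> r2\<close>] .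
  finally show ?thesis .
qed

theorem lemma1:
  fixes n m :: nat
  assumes "m \<le> n"
  shows "\<forall>N. gr_prop 3 K3 (double_star n m) N \<longrightarrow>
           (if even n then 5 * (n div 2) + 1 else 5 * ((n - 1) div 2) + 2) \<le> N"
proof (intro allI impI)
  fix N assume gr: "gr_prop 3 K3 (double_star n m) N"
  show "(if even n then 5 * (n div 2) + 1 else 5 * ((n - 1) div 2) + 2) \<le> N"
  proof (rule ccontr)
    assume "\<not> ?thesis"
    then have N: "N \<le> 5 * (n div 2) + n mod 2"
      by (cases "even n") (auto elim!: oddE)
    have "\<not> mono_copy pentagon_blowup N (double_star n m)"
    proof
      assume "mono_copy pentagon_blowup N (double_star n m)"
      then obtain v col where "n < card (colour_nbhd pentagon_blowup N v col)"
        by (rule mono_copy_double_star_large_colour_nbhd)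
      then show False
        using card_colour_nbhd_pentagon_blowup[OF N, of v col] by simp
    qed
    then show False
      using gr coloring_pentagon_blowup no_rainbow_copy_K3_pentagon_blowup
      unfolding gr_prop_def by blast
  qed
qed

end
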